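(* Let $N\ge1$, $(\Psi_N)_{jk}=\binom{j}{k}$ for $0\le j,k<N$, $\Lambda_N=\mathrm{diag}(1,-1,\dots,(-1)^{N-1})$, and let $J_N$ be the symmetric tridiagonal matrix with $(J_N)_{kk}=k(2k^2+3k+2-N^2)$, $(J_N)_{k,k+1}=(J_N)_{k+1,k}=(k+1)(N^2-(k+1)^2)$. If $\vec v$ is an eigenvector of $J_N$ with eigenvalue $\lambda\neq(N^2-1)/2$, then $\vec v+\Psi_N\Lambda_N\vec v$ and $\vec v-\Psi_N\Lambda_N\vec v$ are nonzero eigenvectors of the binomial transform $\Psi_N\Lambda_N$ with eigenvalues $+1$ and $-1$ respectively. If $N$ is odd and $\vec v$ is an eigenvector of $J_N$ with eigenvalue $(N^2-1)/2$, then $\Psi_N\Lambda_N\vec v=\vec v$.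
   Context: Matrix indices start at $0$. *)

theory Defs
  imports "Jordan_Normal_Form.Char_Poly"
begin

definition Psi :: "nat \<Rightarrow> real mat" where
  "Psi N = mat N N (\<lambda>(j,k). real (j choose k))"

definition Lam :: "nat \<Rightarrow> real mat" where
  "Lam N = mat N N (\<lambda>(j,k). if j = k then (-1) ^ j else 0)"

definition Jmat :: "nat \<Rightarrow> real mat" where
  "Jmat N = mat N N (\<lambda>(j,k).
     if j = k then real k * (2 * real k ^ 2 + 3 * real k + 2 - real N ^ 2)
     else if k = j + 1 then real (j + 1) * (real N ^ 2 - real (j + 1) ^ 2)
     else if j = k + 1 then real (k + 1) * (real N ^ 2 - real (k + 1) ^ 2)
     else 0)"

end

theory Submission
  imports Defs
begin

text \<open>
  Write B = Psi_N Lam_N, so B_jk = (-1)^k binom(j,k). Binomial inversion says B^2 = 1, and the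
  absorption identities for binomial coefficients give J B + B J = (N^2 - 1) B. Hence B maps the
  lam-eigenspace of J into the (N^2 - 1 - lam)-eigenspace, and v + B v, v - B v are eigenvectors of
  B for 1 and -1; neither vanishes, since B v = -v or B v = v would make v an eigenvector of J for
  both lam and N^2 - 1 - lam. For lam = (N^2 - 1)/2 the vector v - B v is again a lam-eigenvector
  of J, and its first coordinate vanishes because the first row of B is e_0. As J is tridiagonal
  with nonzero superdiagonal, an eigenvector is determined by its first coordinate, so B v = v.
\<close>

lemma diff_eq_zero_vec:
  fixes a b :: "'a :: ab_group_add vec"
  assumes "a \<in> carrier_vec n" "b \<in> carrier_vec n"
  shows "a - b = 0\<^sub>v n \<longleftrightarrow> a = b"
  using assms by (auto simp: vec_eq_iff)

lemma add_eq_zero_vec: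
  fixes a b :: "'a :: ring_1 vec"
  assumes "a \<in> carrier_vec n" "b \<in> carrier_vec n"
  shows "a + b = 0\<^sub>v n \<longleftrightarrow> b = (-1) \<cdot>\<^sub>v a"
proof -
  have "a $ i + b $ i = 0 \<longleftrightarrow> b $ i = -1 * a $ i" for i
    by (metis add.commute eq_neg_iff_add_eq_0 mult_minus1)
  then show ?thesis using assms by (auto simp: vec_eq_iff)
qed

lemma index_mult_mat_sum:
  assumes "A \<in> carrier_mat nr n" "B \<in> carrier_mat n nc" "i < nr" "j < nc"
  shows "(A * B) $$ (i, j) = (\<Sum>k<n. A $$ (i, k) * B $$ (k, j))"
  using assms by (auto simp: scalar_prod_def lessThan_atLeast0 intro!: sum.cong)

lemma index_mult_mat_vec_sum:
  assumes "A \<in> carrier_mat nr n" "v \<in> carrier_vec n" "i < nr"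
  shows "(A *\<^sub>v v) $ i = (\<Sum>k<n. A $$ (i, k) * v $ k)"
  using assms by (auto simp: scalar_prod_def lessThan_atLeast0 intro!: sum.cong)

lemma mult_mat_vec_diff_eigen:
  fixes A :: "'a :: field mat"
  assumes A: "A \<in> carrier_mat n n" and v: "v \<in> carrier_vec n" and w: "w \<in> carrier_vec n"
    and "A *\<^sub>v v = mu \<cdot>\<^sub>v v" and "A *\<^sub>v w = mu \<cdot>\<^sub>v w"
  shows "A *\<^sub>v (v - w) = mu \<cdot>\<^sub>v (v - w)"
proof -
  have "A *\<^sub>v (v - w) = mu \<cdot>\<^sub>v v - mu \<cdot>\<^sub>v w"
    using assms by (simp add: mult_minus_distrib_mat_vec)
  also have "\<dots> = mu \<cdot>\<^sub>v (v - w)"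
    using v w by (intro eq_vecI) (auto simp: algebra_simps)
  finally show ?thesis .
qed

lemma anticommuting_mult_eigenvector:
  fixes A B :: "'a :: field mat"
  assumes A: "A \<in> carrier_mat n n" and B: "B \<in> carrier_mat n n"
    and anti: "A * B + B * A = c \<cdot>\<^sub>m B"
    and v: "v \<in> carrier_vec n" and Av: "A *\<^sub>v v = lam \<cdot>\<^sub>v v"
  shows "A *\<^sub>v (B *\<^sub>v v) = (c - lam) \<cdot>\<^sub>v (B *\<^sub>v v)"
proof -
  have "A *\<^sub>v (B *\<^sub>v v) + lam \<cdot>\<^sub>v (B *\<^sub>v v) = (A * B + B * A) *\<^sub>v v"
    using A B v by (simp add: add_mult_distrib_mat_vec[of _ n n] Av mult_mat_vec[of _ n n])
  also have "\<dots> = c \<cdot>\<^sub>v (B *\<^sub>v v)"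
    unfolding anti using B v by (intro eq_vecI) (auto simp: smult_scalar_prod_distrib[of _ n])
  finally have sum: "A *\<^sub>v (B *\<^sub>v v) + lam \<cdot>\<^sub>v (B *\<^sub>v v) = c \<cdot>\<^sub>v (B *\<^sub>v v)" .
  show ?thesis
  proof (rule eq_vecI)
    fix i assume "i < dim_vec ((c - lam) \<cdot>\<^sub>v (B *\<^sub>v v))"
    then have i: "i < n" using B by simp
    have "(A *\<^sub>v (B *\<^sub>v v) + lam \<cdot>\<^sub>v (B *\<^sub>v v)) $ i = (c \<cdot>\<^sub>v (B *\<^sub>v v)) $ i"
      by (simp only: sum)
    then show "(A *\<^sub>v (B *\<^sub>v v)) $ i = ((c - lam) \<cdot>\<^sub>v (B *\<^sub>v v)) $ i"
      using i A B by (simp add: algebra_simps)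
  qed (use A B in simp)
qed

lemma involution_eigenvectors:
  fixes A B :: "'a :: field mat"
  assumes A: "A \<in> carrier_mat n n" and B: "B \<in> carrier_mat n n"
    and inv: "B * B = 1\<^sub>m n" and anti: "A * B + B * A = c \<cdot>\<^sub>m B"
    and ev: "eigenvector A v lam" and ne: "lam \<noteq> c - lam"
  shows "eigenvector B (v + B *\<^sub>v v) 1" and "eigenvector B (v - B *\<^sub>v v) (-1)"
proof -
  from ev A have v: "v \<in> carrier_vec n" and nz: "v \<noteq> 0\<^sub>v n"
    and Av: "A *\<^sub>v v = lam \<cdot>\<^sub>v v"
    unfolding eigenvector_def by auto
  have Bv: "B *\<^sub>v v \<in> carrier_vec n" using B v by simp
  have BBv: "B *\<^sub>v (B *\<^sub>v v) = v"
    using B v by (simp flip: assoc_mult_mat_vec add: inv)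
  \<comment> \<open>a scalar eigenvalue s of B at v would force A to have both lam and c - lam at v\<close>
  have not_scalar: "B *\<^sub>v v \<noteq> s \<cdot>\<^sub>v v" if "s \<noteq> 0" for s
  proof
    assume Bs: "B *\<^sub>v v = s \<cdot>\<^sub>v v"
    obtain i where i: "i < n" "v $ i \<noteq> 0"
      using v nz by (auto simp: vec_eq_iff)
    have "(s * lam) \<cdot>\<^sub>v v = ((c - lam) * s) \<cdot>\<^sub>v v"
      using anticommuting_mult_eigenvector[OF A B anti v Av] A v
      by (simp add: Bs mult_mat_vec Av smult_smult_assoc ac_simps)
    then have "s * lam * v $ i = (c - lam) * s * v $ i"
      by (metis i(1) v carrier_vecD index_smult_vec(1))
    with i that ne show False by simp
  qed
  have "v + B *\<^sub>v v \<noteq> 0\<^sub>v n"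
    using not_scalar[of "-1"] add_eq_zero_vec[OF v Bv] by auto
  moreover have "v - B *\<^sub>v v \<noteq> 0\<^sub>v n"
    using not_scalar[of 1] diff_eq_zero_vec[OF v Bv] by auto
  moreover have "B *\<^sub>v (v + B *\<^sub>v v) = 1 \<cdot>\<^sub>v (v + B *\<^sub>v v)"
    using B v Bv by (simp add: mult_add_distrib_mat_vec[OF B] BBv comm_add_vec[OF Bv v])
  moreover have "B *\<^sub>v (v - B *\<^sub>v v) = (-1) \<cdot>\<^sub>v (v - B *\<^sub>v v)"
    using B v Bv by (intro eq_vecI) (auto simp: mult_minus_distrib_mat_vec[OF B] BBv)
  ultimately show "eigenvector B (v + B *\<^sub>v v) 1" and "eigenvector B (v - B *\<^sub>v v) (-1)"
    unfolding eigenvector_def using B v Bv by auto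
qed

lemma lower_hessenberg_eigenvector_eq_zero:
  fixes A :: "'a :: idom mat"
  assumes A: "A \<in> carrier_mat n n"
    and above_zero: "\<And>i j. j < n \<Longrightarrow> i + 1 < j \<Longrightarrow> A $$ (i, j) = 0"
    and superdiag: "\<And>i. i + 1 < n \<Longrightarrow> A $$ (i, i + 1) \<noteq> 0"
    and w: "w \<in> carrier_vec n" and Aw: "A *\<^sub>v w = mu \<cdot>\<^sub>v w" and head: "w $ 0 = 0"
  shows "w = 0\<^sub>v n"
proof -
  have "\<forall>i\<le>k. w $ i = 0" if "k < n" for k
    using that
  proof (induction k)
    case 0
    with head show ?case by simp
  next
    case (Suc k)
    then have IH: "\<And>i. i \<le> k \<Longrightarrow> w $ i = 0" and k: "k + 1 < n" by auto
    have "mu * w $ k = (A *\<^sub>v w) $ k"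
      using Aw w k by simp
    also have "\<dots> = (\<Sum>i<n. A $$ (k, i) * w $ i)"
      using A w k by (intro index_mult_mat_vec_sum) auto
    also have "\<dots> = (\<Sum>i<n. if i = k + 1 then A $$ (k, k + 1) * w $ (k + 1) else 0)"
    proof (intro sum.cong refl)
      fix i assume "i \<in> {..<n}"
      then show "A $$ (k, i) * w $ i = (if i = k + 1 then A $$ (k, k + 1) * w $ (k + 1) else 0)"
        using IH[of i] above_zero[of i k] by (cases "i \<le> k") auto
    qed
    finally have "A $$ (k, k + 1) * w $ (k + 1) = 0"
      using IH k by simp
    with superdiag[OF k] have "w $ (k + 1) = 0" by simp
    with IH show ?case by (auto simp: le_Suc_eq)
  qed
  then show ?thesis using w by (intro eq_vecI) auto
qed

lemma binomial_inversion:
  "(\<Sum>k\<le>j. (-1) ^ k * of_nat (j choose k) * of_nat (k choose l) :: 'a :: comm_ring_1)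
     = (if j = l then (-1) ^ l else 0)"
proof (cases "l \<le> j")
  case False
  then show ?thesis by (auto intro!: sum.neutral simp: binomial_eq_0)
next
  case True
  have "(\<Sum>k\<le>j. (-1) ^ k * of_nat (j choose k) * of_nat (k choose l) :: 'a)
      = (\<Sum>k\<in>{l..j}. (-1) ^ k * of_nat (j choose k) * of_nat (k choose l))"
    by (intro sum.mono_neutral_right) (auto simp: binomial_eq_0)
  also have "\<dots> = (\<Sum>i\<le>j - l. (-1) ^ (l + i) * of_nat (j choose (l + i)) * of_nat ((l + i) choose l))"
    using True by (intro sum.reindex_bij_witness[of _ "\<lambda>i. l + i" "\<lambda>k. k - l"]) auto
  also have "\<dots> = (\<Sum>i\<le>j - l. (-1) ^ l * of_nat (j choose l) * ((-1) ^ i * of_nat ((j - l) choose i)))"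
  proof (intro sum.cong refl)
    fix i assume "i \<in> {..j - l}"
    then have "(j choose (l + i)) * ((l + i) choose l) = (j choose l) * ((j - l) choose i)"
      using True choose_mult[of l "l + i" j] by simp
    then have "of_nat (j choose (l + i)) * of_nat ((l + i) choose l)
        = (of_nat (j choose l) * of_nat ((j - l) choose i) :: 'a)"
      by (metis of_nat_mult)
    then show "(-1) ^ (l + i) * of_nat (j choose (l + i)) * of_nat ((l + i) choose l)
        = (-1) ^ l * of_nat (j choose l) * ((-1) ^ i * (of_nat ((j - l) choose i) :: 'a))"
      by (simp add: power_add algebra_simps)
  qed
  also have "\<dots> = (-1) ^ l * of_nat (j choose l) * (\<Sum>i\<le>j - l. (-1) ^ i * of_nat ((j - l) choose i))"
    by (simp add: sum_distrib_left)
  also have "\<dots> = (if j = l then (-1) ^ l else 0)"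
    using True choose_alternating_sum[of "j - l", where 'a = 'a] by auto
  finally show ?thesis .
qed

lemma of_nat_binomial_Suc_absorb:
  "(of_nat l + 1) * of_nat (j choose Suc l)
     = (of_nat j - of_nat l) * (of_nat (j choose l) :: 'a :: comm_ring_1)"
proof -
  have "(of_nat j + 1) * of_nat (j choose l)
      = (of_nat (j choose l) + of_nat (j choose Suc l)) * (of_nat l + (1 :: 'a))"
    using Suc_times_binomial_eq[of j l]
    by (metis binomial_Suc_Suc of_nat_Suc of_nat_add of_nat_mult add.commute)
  then show ?thesis by (simp add: algebra_simps)
qed

lemma Psi_Lam_carrier: "Psi N * Lam N \<in> carrier_mat N N"
proof -
  have "Psi N \<in> carrier_mat N N" "Lam N \<in> carrier_mat N N"
    by (simp_all add: Psi_def Lam_def)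
  then show ?thesis by (rule mult_carrier_mat)
qed

lemma Psi_Lam_index:
  assumes "j < N" "k < N"
  shows "(Psi N * Lam N) $$ (j, k) = (-1) ^ k * real (j choose k)"
proof -
  have "(Psi N * Lam N) $$ (j, k) = (\<Sum>i<N. Psi N $$ (j, i) * Lam N $$ (i, k))"
    using assms by (intro index_mult_mat_sum) (auto simp: Psi_def Lam_def)
  also have "\<dots> = (\<Sum>i<N. if i = k then (-1) ^ k * real (j choose k) else 0)"
    using assms by (intro sum.cong) (auto simp: Psi_def Lam_def)
  finally show ?thesis
    using assms by simp
qed

lemma Psi_Lam_involution: "(Psi N * Lam N) * (Psi N * Lam N) = 1\<^sub>m N"
proof (rule eq_matI)
  fix j l assume "j < dim_row (1\<^sub>m N)" "l < dim_col (1\<^sub>m N)"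
  then have j: "j < N" and l: "l < N" by auto
  have "((Psi N * Lam N) * (Psi N * Lam N)) $$ (j, l)
      = (\<Sum>k<N. (-1) ^ k * real (j choose k) * ((-1) ^ l * real (k choose l)))"
    using j l by (simp add: index_mult_mat_sum[OF Psi_Lam_carrier Psi_Lam_carrier] Psi_Lam_index)
  also have "\<dots> = (\<Sum>k\<le>j. (-1) ^ k * real (j choose k) * ((-1) ^ l * real (k choose l)))"
    using j by (intro sum.mono_neutral_right) (auto simp: binomial_eq_0)
  also have "\<dots> = (-1) ^ l * (\<Sum>k\<le>j. (-1) ^ k * real (j choose k) * real (k choose l))"
    by (simp add: sum_distrib_left ac_simps)
  also have "\<dots> = 1\<^sub>m N $$ (j, l)"
    using j l by (simp add: binomial_inversion flip: power_add)
  finally show "((Psi N * Lam N) * (Psi N * Lam N)) $$ (j, l) = 1\<^sub>m N $$ (j, l)" .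
qed (auto simp: Psi_def Lam_def)

lemma Psi_Lam_mult_vec_0:
  assumes "0 < N" "v \<in> carrier_vec N"
  shows "((Psi N * Lam N) *\<^sub>v v) $ 0 = v $ 0"
proof -
  have "((Psi N * Lam N) *\<^sub>v v) $ 0 = (\<Sum>k<N. (Psi N * Lam N) $$ (0, k) * v $ k)"
    using assms by (intro index_mult_mat_vec_sum[OF Psi_Lam_carrier])
  also have "\<dots> = (\<Sum>k<N. if k = 0 then v $ 0 else 0)"
    by (intro sum.cong) (auto simp: Psi_Lam_index)
  finally show ?thesis
    using assms by simp
qed

text \<open>
  Jsub N k is the off-diagonal entry (J_N)_{k-1,k}. Because Jsub N 0 = Jsub N N = 0, the three-term
  row formula below needs no special case in the first and last row.
\<close>

definition Jsub :: "nat \<Rightarrow> nat \<Rightarrow> real" where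
  "Jsub N k = real k * (real N ^ 2 - real k ^ 2)"

definition Jdiag :: "nat \<Rightarrow> nat \<Rightarrow> real" where
  "Jdiag N k = real k * (2 * real k ^ 2 + 3 * real k + 2 - real N ^ 2)"

lemma Jsub_0 [simp]: "Jsub N 0 = 0"
  by (simp add: Jsub_def)

lemma Jmat_carrier: "Jmat N \<in> carrier_mat N N"
  by (simp add: Jmat_def)

lemma Jmat_index:
  "j < N \<Longrightarrow> k < N \<Longrightarrow> Jmat N $$ (j, k) =
     (if j = k then Jdiag N k else if k = j + 1 then Jsub N k else if j = k + 1 then Jsub N j else 0)"
  by (simp add: Jmat_def Jdiag_def Jsub_def)

lemma Jmat_symmetric: "j < N \<Longrightarrow> k < N \<Longrightarrow> Jmat N $$ (j, k) = Jmat N $$ (k, j)"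
  by (auto simp: Jmat_index)

lemma Jmat_row_sum:
  assumes j: "j < N"
  shows "(\<Sum>k<N. Jmat N $$ (j, k) * f k)
    = Jsub N j * f (j - 1) + Jdiag N j * f j + Jsub N (j + 1) * f (j + 1)"
proof -
  have "(\<Sum>k<N. Jmat N $$ (j, k) * f k)
      = (\<Sum>k<N. (if k = j - 1 then if 0 < j then Jsub N j * f (j - 1) else 0 else 0)
      + (if k = j then Jdiag N j * f j else 0) + (if k = j + 1 then Jsub N (j + 1) * f (j + 1) else 0))"
    using j by (intro sum.cong) (auto simp: Jmat_index Jsub_def)
  also have "\<dots> = Jsub N j * f (j - 1) + Jdiag N j * f j + Jsub N (j + 1) * f (j + 1)"
  proof (cases "j + 1 < N")
    case False
    then have "j + 1 = N" using j by simp
    then have "Jsub N (j + 1) = 0" by (simp add: Jsub_def)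
    then show ?thesis using j by (auto simp: sum.distrib)
  qed (use j in \<open>auto simp: sum.distrib\<close>)
  finally show ?thesis .
qed

text \<open>Entry (j, l) of J B + B J = (N^2 - 1) B, divided by the sign (-1)^l.\<close>

lemma Jmat_binomial_identity:
  "Jsub N j * real ((j - 1) choose l) + Jdiag N j * real (j choose l) + Jsub N (j + 1) * real ((j + 1) choose l)
   - Jsub N l * real (j choose (l - 1)) + Jdiag N l * real (j choose l) - Jsub N (l + 1) * real (j choose (l + 1))
   = (real N ^ 2 - 1) * real (j choose l)"
proof (cases l)
  case 0
  then show ?thesis
    by (simp add: Jsub_def Jdiag_def algebra_simps power2_eq_square power3_eq_cube)
next
  case (Suc m)
  define x x_row x_left x_right
    where "x = real (j choose l)" and "x_row = real ((j - 1) choose l)"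
      and "x_left = real (j choose m)" and "x_right = real (j choose (l + 1))"
  have right: "(real l + 1) * x_right = (real j - real l) * x"
    using of_nat_binomial_Suc_absorb[of l j, where 'a = real] by (simp add: x_def x_right_def)
  have row: "real j * x_row = (real l + 1) * x_right"
    using arg_cong[OF binomial_absorption[of l j], of real] by (simp add: x_row_def x_right_def algebra_simps)
  have left: "(real j + 1 - real l) * x_left = real l * x"
    using of_nat_binomial_Suc_absorb[of m j, where 'a = real] Suc by (simp add: x_def x_left_def algebra_simps)
  have pascal: "real ((j + 1) choose l) = x + x_left"
    using Suc by (simp add: x_def x_left_def)
  have linear_combination:
    "b * (n\<^sup>2 - b\<^sup>2) * x_row + b * (2 * b\<^sup>2 + 3 * b + 2 - n\<^sup>2) * x + (b + 1) * (n\<^sup>2 - (b + 1)\<^sup>2) * (x + x_left)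
     - a * (n\<^sup>2 - a\<^sup>2) * x_left + a * (2 * a\<^sup>2 + 3 * a + 2 - n\<^sup>2) * x - (a + 1) * (n\<^sup>2 - (a + 1)\<^sup>2) * x_right
     - (n\<^sup>2 - 1) * x
     = (n\<^sup>2 - b\<^sup>2) * (b * x_row - (a + 1) * x_right) + ((a + 1)\<^sup>2 - b\<^sup>2) * ((a + 1) * x_right - (b - a) * x)
       + (n\<^sup>2 - (b + 1)\<^sup>2 - (b + 1) * a - a\<^sup>2) * ((b + 1 - a) * x_left - a * x)" for n a b :: real
    by (simp add: algebra_simps power2_eq_square)
  have "Jsub N j * x_row + Jdiag N j * x + Jsub N (j + 1) * (x + x_left) - Jsub N l * x_left + Jdiag N l * x
        - Jsub N (l + 1) * x_right - (real N ^ 2 - 1) * x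
      = (real N ^ 2 - real j ^ 2) * (real j * x_row - (real l + 1) * x_right)
        + ((real l + 1) ^ 2 - real j ^ 2) * ((real l + 1) * x_right - (real j - real l) * x)
        + (real N ^ 2 - (real j + 1) ^ 2 - (real j + 1) * real l - real l ^ 2)
          * ((real j + 1 - real l) * x_left - real l * x)"
    unfolding Jsub_def Jdiag_def of_nat_add of_nat_1 by (rule linear_combination)
  also have "\<dots> = 0"
    using right row left by simp
  finally show ?thesis
    using Suc pascal by (simp add: x_def x_row_def x_left_def x_right_def ac_simps)
qed

lemma Jmat_eigenvector_eq_zero:
  assumes "w \<in> carrier_vec N" "Jmat N *\<^sub>v w = mu \<cdot>\<^sub>v w" "w $ 0 = 0"
  shows "w = 0\<^sub>v N"
proof (rule lower_hessenberg_eigenvector_eq_zero[OF Jmat_carrier _ _ assms])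
  show "Jmat N $$ (i, j) = 0" if "j < N" "i + 1 < j" for i j
    using that by (simp add: Jmat_index)
  show "Jmat N $$ (i, i + 1) \<noteq> 0" if "i + 1 < N" for i
  proof -
    have "real (i + 1) ^ 2 < real N ^ 2"
      using that by (intro power_strict_mono) auto
    then show ?thesis
      using that by (simp add: Jmat_index Jsub_def)
  qed
qed

lemma Jmat_Psi_Lam_anticommute:
  "Jmat N * (Psi N * Lam N) + (Psi N * Lam N) * Jmat N = (real N ^ 2 - 1) \<cdot>\<^sub>m (Psi N * Lam N)"
proof -
  have dims: "dim_row (Psi N) = N" "dim_col (Lam N) = N"
    "dim_row (Jmat N) = N" "dim_col (Jmat N) = N"
    by (simp_all add: Psi_def Lam_def Jmat_def)
  show ?thesis
  proof (rule eq_matI)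
    fix j l assume "j < dim_row ((real N ^ 2 - 1) \<cdot>\<^sub>m (Psi N * Lam N))"
      "l < dim_col ((real N ^ 2 - 1) \<cdot>\<^sub>m (Psi N * Lam N))"
    then have j: "j < N" and l: "l < N" by (simp_all add: dims)
    have "(Jmat N * (Psi N * Lam N)) $$ (j, l) = (\<Sum>k<N. Jmat N $$ (j, k) * ((-1) ^ l * real (k choose l)))"
      using j l by (simp add: index_mult_mat_sum[OF Jmat_carrier Psi_Lam_carrier] Psi_Lam_index)
    also have "\<dots> = Jsub N j * ((-1) ^ l * real ((j - 1) choose l))
        + Jdiag N j * ((-1) ^ l * real (j choose l))
        + Jsub N (j + 1) * ((-1) ^ l * real ((j + 1) choose l))"
      by (rule Jmat_row_sum[OF j])
    also have "\<dots> = (-1) ^ l * (Jsub N j * real ((j - 1) choose l) + Jdiag N j * real (j choose l)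
        + Jsub N (j + 1) * real ((j + 1) choose l))"
      by (simp add: algebra_simps)
    finally have JB: "(Jmat N * (Psi N * Lam N)) $$ (j, l) = \<dots>" .
    have "((Psi N * Lam N) * Jmat N) $$ (j, l) = (\<Sum>k<N. Jmat N $$ (l, k) * ((-1) ^ k * real (j choose k)))"
      using j l by (auto simp: index_mult_mat_sum[OF Psi_Lam_carrier Jmat_carrier] Psi_Lam_index
          Jmat_symmetric[of _ N l] intro!: sum.cong)
    also have "\<dots> = Jsub N l * ((-1) ^ (l - 1) * real (j choose (l - 1)))
        + Jdiag N l * ((-1) ^ l * real (j choose l))
        + Jsub N (l + 1) * ((-1) ^ (l + 1) * real (j choose (l + 1)))"
      by (rule Jmat_row_sum[OF l])
    also have "\<dots> = (-1) ^ l * (Jdiag N l * real (j choose l) - Jsub N l * real (j choose (l - 1))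
        - Jsub N (l + 1) * real (j choose (l + 1)))"
      by (cases l) (simp_all add: algebra_simps)
    finally have BJ: "((Psi N * Lam N) * Jmat N) $$ (j, l) = \<dots>" .
    have "(Jmat N * (Psi N * Lam N) + (Psi N * Lam N) * Jmat N) $$ (j, l)
        = (-1) ^ l * (Jsub N j * real ((j - 1) choose l) + Jdiag N j * real (j choose l)
          + Jsub N (j + 1) * real ((j + 1) choose l) - Jsub N l * real (j choose (l - 1))
          + Jdiag N l * real (j choose l) - Jsub N (l + 1) * real (j choose (l + 1)))"
      using j l by (simp add: JB BJ dims algebra_simps)
    also have "\<dots> = (real N ^ 2 - 1) * ((-1) ^ l * real (j choose l))"
      using Jmat_binomial_identity[of N j l] by simp
    also have "\<dots> = ((real N ^ 2 - 1) \<cdot>\<^sub>m (Psi N * Lam N)) $$ (j, l)"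
      using j l by (subst index_smult_mat) (simp_all add: Psi_Lam_index dims del: index_mult_mat(1))
    finally show "(Jmat N * (Psi N * Lam N) + (Psi N * Lam N) * Jmat N) $$ (j, l)
        = ((real N ^ 2 - 1) \<cdot>\<^sub>m (Psi N * Lam N)) $$ (j, l)" .
  qed (simp_all add: dims)
qed

lemma Psi_Lam_fixes_middle_eigenvector:
  assumes ev: "eigenvector (Jmat N) v ((real N ^ 2 - 1) / 2)"
  shows "(Psi N * Lam N) *\<^sub>v v = v"
proof -
  let ?B = "Psi N * Lam N" and ?c = "real N ^ 2 - 1"
  note J = Jmat_carrier[of N] and B = Psi_Lam_carrier[of N]
  from ev J have v: "v \<in> carrier_vec N" and nz: "v \<noteq> 0\<^sub>v N"
    and Jv: "Jmat N *\<^sub>v v = (?c / 2) \<cdot>\<^sub>v v"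
    unfolding eigenvector_def by auto
  have N: "0 < N"
    using v nz by (auto simp: vec_eq_iff)
  have Bv: "?B *\<^sub>v v \<in> carrier_vec N" using B v by simp
  have "Jmat N *\<^sub>v (?B *\<^sub>v v) = (?c - ?c / 2) \<cdot>\<^sub>v (?B *\<^sub>v v)"
    by (rule anticommuting_mult_eigenvector[OF J B Jmat_Psi_Lam_anticommute v Jv])
  then have JBv: "Jmat N *\<^sub>v (?B *\<^sub>v v) = (?c / 2) \<cdot>\<^sub>v (?B *\<^sub>v v)"
    by (simp add: field_simps)
  have "Jmat N *\<^sub>v (v - ?B *\<^sub>v v) = (?c / 2) \<cdot>\<^sub>v (v - ?B *\<^sub>v v)"
    by (rule mult_mat_vec_diff_eigen[OF J v Bv Jv JBv])
  moreover have "(v - ?B *\<^sub>v v) $ 0 = 0"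
    using N Psi_Lam_mult_vec_0[OF N v] by (simp add: Psi_def)
  ultimately have "v - ?B *\<^sub>v v = 0\<^sub>v N"
    using v Bv by (intro Jmat_eigenvector_eq_zero) auto
  then show ?thesis
    using diff_eq_zero_vec[OF v Bv] by simp
qed

theorem mainTheorem12:
  fixes N :: nat
  assumes "N \<ge> 1"
  shows "(\<forall>v lam. eigenvector (Jmat N) v lam \<and> lam \<noteq> (real N ^ 2 - 1) / 2 \<longrightarrow>
            eigenvector (Psi N * Lam N) (v + (Psi N * Lam N) *\<^sub>v v) 1 \<and>
            eigenvector (Psi N * Lam N) (v - (Psi N * Lam N) *\<^sub>v v) (-1))
       \<and> (odd N \<longrightarrow> (\<forall>v. eigenvector (Jmat N) v ((real N ^ 2 - 1) / 2) \<longrightarrow>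
            (Psi N * Lam N) *\<^sub>v v = v))"
proof -
  let ?B = "Psi N * Lam N"
  have split: "eigenvector ?B (v + ?B *\<^sub>v v) 1 \<and> eigenvector ?B (v - ?B *\<^sub>v v) (-1)"
    if "eigenvector (Jmat N) v lam" "lam \<noteq> (real N ^ 2 - 1) / 2" for v lam
    using involution_eigenvectors[OF Jmat_carrier Psi_Lam_carrier Psi_Lam_involution
        Jmat_Psi_Lam_anticommute that(1)] that(2)
    by auto
  show ?thesis
    using split Psi_Lam_fixes_middle_eigenvector by blast
qed

end
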